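(* Let $P$ be a finite set of points in the plane, and call $X\subseteq P$ a clique if the unit disks $D(p,1)$, $p\in X$, pairwise intersect (equivalently, all pairwise distances in $X$ are at most $2$). Let $\mathcal{G}$ be a regular axis-parallel square grid whose cells have diameter $2$, let $C$ be a grid cell containing at least one point of $P$, let $C^+$ be the $5\times 5$ block of grid cells whose central cell is $C$, and let $P_C$ be the set of points of $P$ lying in some cell of $C^+$. Let $\varepsilon>0$. Choose $p_1,p_2\in P_C$ independently and uniformly at random. Let $s$ be the line segment of length $2$ starting at $p_2$ and directed toward $p_1$, let $x$ be its other endpoint, let $L=D(x,2)\cap D(p_2,2)$, and let $P_L=L\cap P_C$. Let $X\subseteq P_L$ be a clique with $|X|\ge(1-\varepsilon/2)|Y^*|$, where $Y^*$ is a maximum clique in $P_L$. Let $X^*$ be a maximum clique in $P_C$. Then there is an absolute constant $c>0$ such that, with probability at least $c\,\varepsilon$ (over the choice of $p_1,p_2$), $|X|\ge(1-\varepsilon)|X^*|$.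
   Context: $D(p,r)$ denotes the closed disk with center $p$ and radius $r$. Grid cells are closed squares. If $p_1=p_2$, the direction of $s$ is arbitrary. *)

theory Defs
  imports "HOL-Analysis.Analysis" "HOL-Probability.Probability"
begin

definition is_clique :: "(real \<times> real) set \<Rightarrow> bool" where
  "is_clique X \<longleftrightarrow> (\<forall>p\<in>X. \<forall>q\<in>X. cball p 1 \<inter> cball q 1 \<noteq> {})"

definition clique_number :: "(real \<times> real) set \<Rightarrow> nat" where
  "clique_number S = Max (card ` {X. X \<subseteq> S \<and> is_clique X})"

text \<open>Regular axis-parallel square grid with offset (a,b) and side length sqrt 2
  (so every cell has diameter 2); cell (i,j) is a closed square.\<close>
definition grid_cell :: "real \<Rightarrow> real \<Rightarrow> int \<Rightarrow> int \<Rightarrow> (real \<times> real) set" where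
  "grid_cell a b i j =
     {z. a + of_int i * sqrt 2 \<le> fst z \<and> fst z \<le> a + of_int (i + 1) * sqrt 2 \<and>
         b + of_int j * sqrt 2 \<le> snd z \<and> snd z \<le> b + of_int (j + 1) * sqrt 2}"

definition block_points :: "real \<Rightarrow> real \<Rightarrow> int \<Rightarrow> int \<Rightarrow> (real \<times> real) set \<Rightarrow> (real \<times> real) set" where
  "block_points a b i j P =
     {p \<in> P. \<exists>di dj. \<bar>di\<bar> \<le> 2 \<and> \<bar>dj\<bar> \<le> 2 \<and> p \<in> grid_cell a b (i + di) (j + dj)}"

text \<open>The lens L = D(x,2) \<inter> D(p2,2), where x = p2 + 2 u is the other endpoint of the
  length-2 segment starting at p2 in unit direction u.\<close>
definition lens :: "real \<times> real \<Rightarrow> real \<times> real \<Rightarrow> (real \<times> real) set" where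
  "lens p2 u = cball (p2 + 2 *\<^sub>R u) 2 \<inter> cball p2 2"

end

theory Submission
  imports Defs
begin

text \<open>Let \<open>X\<^sup>*\<close> be a maximum clique of \<open>P\<^sub>C\<close>, of size \<open>k\<close>. Each of the 25 cells of the block
  has diameter 2 and is therefore a clique, so \<open>|P\<^sub>C| \<le> 25 k\<close>. For \<open>p\<^sub>1 \<in> X\<^sup>*\<close> let \<open>T(p\<^sub>1)\<close> be the
  \<open>\<lfloor>\<epsilon>k/2\<rfloor> + 1\<close> points of \<open>X\<^sup>*\<close> farthest from \<open>p\<^sub>1\<close>. If \<open>p\<^sub>2 \<in> T(p\<^sub>1)\<close>, every point of \<open>X\<^sup>*\<close> that is
  at least as close to \<open>p\<^sub>1\<close> as \<open>p\<^sub>2\<close> lies in the lens \<open>L\<close>, so \<open>L\<close> misses at most \<open>\<epsilon>k/2\<close> points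
  of \<open>X\<^sup>*\<close>. Hence \<open>P\<^sub>L\<close> contains a clique of size \<open>(1 - \<epsilon>/2) k\<close>, and
  \<open>|X| \<ge> (1 - \<epsilon>/2)\<^sup>2 k \<ge> (1 - \<epsilon>) k\<close>. There are at least \<open>\<epsilon>k\<^sup>2/2\<close> such pairs among the at most
  \<open>625 k\<^sup>2\<close> pairs of points of \<open>P\<^sub>C\<close>, so the probability is at least \<open>\<epsilon>/1250\<close>.\<close>

lemma is_clique_iff_dist: "is_clique X \<longleftrightarrow> (\<forall>p\<in>X. \<forall>q\<in>X. dist p q \<le> 2)"
proof -
  have "cball p 1 \<inter> cball q 1 \<noteq> {} \<longleftrightarrow> dist p q \<le> 2" for p q :: "real \<times> real"
  proof
    assume "cball p 1 \<inter> cball q 1 \<noteq> {}"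
    then obtain z where "dist p z \<le> 1" "dist q z \<le> 1" by auto
    then show "dist p q \<le> 2" by (smt (verit) dist_commute dist_triangle)
  next
    assume "dist p q \<le> 2"
    then have "midpoint p q \<in> cball p 1 \<inter> cball q 1" by (simp add: dist_midpoint)
    then show "cball p 1 \<inter> cball q 1 \<noteq> {}" by auto
  qed
  then show ?thesis unfolding is_clique_def by auto
qed

lemma finite_cliques: "finite S \<Longrightarrow> finite {X. X \<subseteq> S \<and> is_clique X}"
  by (rule finite_subset[of _ "Pow S"]) auto

lemma card_le_clique_number:
  assumes "finite S" "X \<subseteq> S" "is_clique X"
  shows "card X \<le> clique_number S"
  unfolding clique_number_def using assms finite_cliques[OF assms(1)] by (intro Max_ge) auto

lemma clique_number_attained:
  assumes "finite S"
  obtains X where "X \<subseteq> S" "is_clique X" "card X = clique_number S"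
proof -
  have "{} \<in> {X. X \<subseteq> S \<and> is_clique X}" by (simp add: is_clique_def)
  then have "clique_number S \<in> card ` {X. X \<subseteq> S \<and> is_clique X}"
    unfolding clique_number_def using finite_cliques[OF assms] by (intro Max_in) auto
  then show ?thesis using that by auto
qed

lemma clique_number_pos: "finite S \<Longrightarrow> p \<in> S \<Longrightarrow> 0 < clique_number S"
  using card_le_clique_number[of S "{p}"] by (simp add: is_clique_iff_dist)

lemma dist_le_2_grid_cell:
  assumes "p \<in> grid_cell a b i j" "q \<in> grid_cell a b i j"
  shows "dist p q \<le> 2"
proof -
  obtain p1 p2 q1 q2 where pq: "p = (p1, p2)" "q = (q1, q2)" by fastforce
  have "\<bar>p1 - q1\<bar> \<le> \<bar>sqrt 2\<bar>" "\<bar>p2 - q2\<bar> \<le> \<bar>sqrt 2\<bar>"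
    using assms unfolding grid_cell_def pq by (auto simp: algebra_simps)
  then have "(p1 - q1)\<^sup>2 \<le> 2" "(p2 - q2)\<^sup>2 \<le> 2"
    unfolding abs_le_square_iff by simp_all
  then show ?thesis unfolding pq dist_Pair_Pair dist_real_def by (intro real_le_lsqrt) simp_all
qed

lemma is_clique_Int_grid_cell: "is_clique (S \<inter> grid_cell a b i j)"
  unfolding is_clique_iff_dist using dist_le_2_grid_cell by blast

lemma card_block_points_le:
  assumes "finite P"
  shows "card (block_points a b i j P) \<le> 25 * clique_number (block_points a b i j P)"
proof -
  define S where "S = block_points a b i j P"
  define I where "I = {-2..2::int} \<times> {-2..2::int}"
  define cell where "cell = (\<lambda>(di, dj). S \<inter> grid_cell a b (i + di) (j + dj))"
  have "finite S" using assms unfolding S_def block_points_def by simp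
  have "S \<subseteq> (\<Union>d\<in>I. cell d)"
  proof
    fix z assume "z \<in> S"
    then obtain di dj where "\<bar>di\<bar> \<le> 2" "\<bar>dj\<bar> \<le> 2" "z \<in> grid_cell a b (i + di) (j + dj)"
      unfolding S_def block_points_def by auto
    then show "z \<in> (\<Union>d\<in>I. cell d)"
      using \<open>z \<in> S\<close> unfolding I_def cell_def by (intro UN_I[of "(di, dj)"]) auto
  qed
  then have "card S \<le> card (\<Union>d\<in>I. cell d)"
    by (intro card_mono finite_subset[OF _ \<open>finite S\<close>]) (auto simp: cell_def)
  also have "\<dots> \<le> (\<Sum>d\<in>I. card (cell d))"
    unfolding I_def by (intro card_UN_le) simp
  also have "\<dots> \<le> of_nat (card I) * clique_number S"
    using card_le_clique_number[OF \<open>finite S\<close>] is_clique_Int_grid_cell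
    by (intro sum_bounded_above) (auto simp: cell_def)
  also have "card I = 25" unfolding I_def by simp
  finally show ?thesis unfolding S_def by simp
qed

lemma ex_top_subset:
  fixes f :: "'a \<Rightarrow> 'b::linorder"
  assumes "finite X" "m \<le> card X"
  shows "\<exists>T\<subseteq>X. card T = m \<and> (\<forall>t\<in>T. \<forall>q\<in>X - T. f q \<le> f t)"
  using assms(2)
proof (induction m)
  case 0
  show ?case by auto
next
  case (Suc m)
  then obtain T where T: "T \<subseteq> X" "card T = m" "\<forall>t\<in>T. \<forall>q\<in>X - T. f q \<le> f t"
    by auto
  have fin: "finite (X - T)" "X - T \<noteq> {}"
    using assms(1) T Suc.prems by auto
  then have "Max (f ` (X - T)) \<in> f ` (X - T)" by (intro Max_in) auto
  then obtain t where t: "t \<in> X - T" "f t = Max (f ` (X - T))" by auto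
  then have "\<forall>q\<in>X - T. f q \<le> f t" using fin by simp
  moreover have "finite T" using T(1) assms(1) by (rule finite_subset)
  ultimately show ?case
    using T t by (intro exI[of _ "insert t T"]) auto
qed

lemma dist_far_endpoint_le:
  fixes p1 p2 q u :: "'a::real_inner"
  assumes u: "norm u = 1" and p1: "p1 - p2 = d *\<^sub>R u" and d: "0 \<le> d" "d \<le> 2"
    and q: "dist q p1 \<le> d"
  shows "dist (p2 + 2 *\<^sub>R u) q \<le> 2"
proof -
  \<comment> \<open>With \<open>v = q - p\<^sub>2\<close>, the hypothesis on \<open>q\<close> reads \<open>|v|\<^sup>2 \<le> 2d (v\<bullet>u)\<close> and the claim reads
    \<open>|v|\<^sup>2 \<le> 4 (v\<bullet>u)\<close>.\<close>
  define v where "v = q - p2"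
  have uu: "u \<bullet> u = 1" using u by (simp add: norm_eq_1)
  have "q - p1 = v - d *\<^sub>R u" using p1 unfolding v_def by (simp add: algebra_simps)
  then have "(dist q p1)\<^sup>2 = (v - d *\<^sub>R u) \<bullet> (v - d *\<^sub>R u)"
    by (simp only: dist_norm power2_norm_eq_inner)
  also have "\<dots> = v \<bullet> v - 2 * d * (v \<bullet> u) + d\<^sup>2"
    by (simp add: inner_diff_left inner_diff_right uu inner_commute power2_eq_square)
  finally have "(dist q p1)\<^sup>2 = v \<bullet> v - 2 * d * (v \<bullet> u) + d\<^sup>2" .
  moreover have "(dist q p1)\<^sup>2 \<le> d\<^sup>2" using q by (simp add: power_mono)
  ultimately have v: "v \<bullet> v \<le> 2 * d * (v \<bullet> u)" by simp
  have "v \<bullet> v \<le> 4 * (v \<bullet> u)"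
  proof (cases "d = 0")
    case True
    then have "v = 0" using v by (simp add: order_antisym_conv)
    then show ?thesis by simp
  next
    case False
    then have "0 \<le> v \<bullet> u" using v d by (smt (verit) inner_ge_zero zero_le_mult_iff)
    then have "2 * d * (v \<bullet> u) \<le> 4 * (v \<bullet> u)" using d by (intro mult_right_mono) auto
    then show ?thesis using v by linarith
  qed
  moreover have "p2 + 2 *\<^sub>R u - q = 2 *\<^sub>R u - v" unfolding v_def by (simp add: algebra_simps)
  then have "(dist (p2 + 2 *\<^sub>R u) q)\<^sup>2 = (2 *\<^sub>R u - v) \<bullet> (2 *\<^sub>R u - v)"
    by (simp only: dist_norm power2_norm_eq_inner)
  then have "(dist (p2 + 2 *\<^sub>R u) q)\<^sup>2 = v \<bullet> v - 4 * (v \<bullet> u) + 4"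
    by (simp add: inner_diff_left inner_diff_right uu inner_commute)
  ultimately have "(dist (p2 + 2 *\<^sub>R u) q)\<^sup>2 \<le> 2\<^sup>2" by simp
  then show ?thesis by (rule power2_le_imp_le) simp
qed

lemma mem_lens_if_closer:
  fixes p1 p2 q u :: "real \<times> real"
  assumes u: "norm u = 1" "p1 \<noteq> p2 \<longrightarrow> u = (1 / norm (p1 - p2)) *\<^sub>R (p1 - p2)"
    and "dist p1 p2 \<le> 2" "dist p2 q \<le> 2" "dist q p1 \<le> dist p2 p1"
  shows "q \<in> lens p2 u"
proof -
  have "p1 - p2 = dist p2 p1 *\<^sub>R u"
    using u by (cases "p1 = p2") (auto simp: dist_norm norm_minus_commute)
  then have "dist (p2 + 2 *\<^sub>R u) q \<le> 2"
    using assms by (intro dist_far_endpoint_le[OF u(1)]) (auto simp: dist_commute)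
  then show ?thesis using assms unfolding lens_def by (simp add: dist_commute)
qed

text \<open>A point of \<open>X\<close> outside \<open>T\<close> is at least as close to \<open>p\<^sub>1\<close> as \<open>p\<^sub>2\<close>, hence lies in the lens,
  so the lens misses only points of \<open>T - {p\<^sub>2}\<close>.\<close>
lemma card_less_clique_number_lens_add:
  assumes S: "finite S" "X \<subseteq> S" and X: "is_clique X"
    and T: "T \<subseteq> X" "p1 \<in> X" "p2 \<in> T" "\<forall>t\<in>T. \<forall>q\<in>X - T. dist q p1 \<le> dist t p1"
    and u: "norm u = 1" "p1 \<noteq> p2 \<longrightarrow> u = (1 / norm (p1 - p2)) *\<^sub>R (p1 - p2)"
  shows "card X < clique_number (lens p2 u \<inter> S) + card T"
proof -
  define L where "L = lens p2 u \<inter> S"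
  have finX: "finite X" using S by (rule finite_subset[rotated])
  have finT: "finite T" using T(1) finX by (rule finite_subset)
  have inL: "q \<in> L" if "q \<in> X" "dist q p1 \<le> dist p2 p1" for q
  proof -
    have "p2 \<in> X" using T(1,3) by blast
    then have "dist p1 p2 \<le> 2" "dist p2 q \<le> 2"
      using X T(2) that(1) unfolding is_clique_iff_dist by blast+
    then have "q \<in> lens p2 u" using mem_lens_if_closer[OF u _ _ that(2)] by blast
    then show ?thesis using that(1) S(2) unfolding L_def by blast
  qed
  have "X - L \<subseteq> T - {p2}"
  proof
    fix q assume q: "q \<in> X - L"
    moreover have "p2 \<in> L" using T(1,3) by (intro inL) auto
    ultimately have "q \<noteq> p2" by auto
    moreover have "q \<in> T"
    proof (rule ccontr)
      assume "q \<notin> T"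
      then have "dist q p1 \<le> dist p2 p1" using T(3,4) q by blast
      then show False using inL q by blast
    qed
    ultimately show "q \<in> T - {p2}" by simp
  qed
  then have "card (X - L) \<le> card (T - {p2})" using finT by (intro card_mono) auto
  also have "\<dots> < card T" using finT T(3) by (rule card_Diff1_less)
  finally have "card (X - L) < card T" .
  moreover have "card (X \<inter> L) \<le> clique_number L"
  proof (rule card_le_clique_number)
    show "finite L" using S(1) unfolding L_def by simp
    show "is_clique (X \<inter> L)" using X unfolding is_clique_iff_dist by blast
  qed simp
  moreover have "card X = card (X \<inter> L) + card (X - L)"
    using card_Int_Diff[OF finX] by simp
  ultimately show ?thesis unfolding L_def by linarith
qed

lemma half_loss_twice_le:
  fixes \<epsilon> k c x :: real
  assumes "0 \<le> k" "\<epsilon> \<le> 2" "(1 - \<epsilon> / 2) * k \<le> c" "(1 - \<epsilon> / 2) * c \<le> x"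
  shows "(1 - \<epsilon>) * k \<le> x"
proof -
  have "(1 - \<epsilon> / 2) * ((1 - \<epsilon> / 2) * k) = (1 - \<epsilon>) * k + (\<epsilon> / 2)\<^sup>2 * k"
    by (simp add: power2_eq_square field_simps)
  then have "(1 - \<epsilon>) * k \<le> (1 - \<epsilon> / 2) * ((1 - \<epsilon> / 2) * k)"
    using assms(1) by simp
  also have "\<dots> \<le> (1 - \<epsilon> / 2) * c"
    using assms(2,3) by (intro mult_left_mono) auto
  finally show ?thesis using assms(4) by linarith
qed

lemma card_good_pairs_ge:
  fixes S :: "(real \<times> real) set" and \<epsilon> :: real
    and dir :: "real \<times> real \<Rightarrow> real \<times> real \<Rightarrow> real \<times> real"
    and Xs :: "real \<times> real \<Rightarrow> real \<times> real \<Rightarrow> (real \<times> real) set"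
  assumes S: "finite S" "S \<noteq> {}" and \<epsilon>: "0 \<le> \<epsilon>" "\<epsilon> \<le> 1"
    and dir: "\<forall>p1\<in>S. \<forall>p2\<in>S. norm (dir p1 p2) = 1 \<and>
          (p1 \<noteq> p2 \<longrightarrow> dir p1 p2 = (1 / norm (p1 - p2)) *\<^sub>R (p1 - p2))"
    and Xs: "\<forall>p1\<in>S. \<forall>p2\<in>S.
          (1 - \<epsilon> / 2) * real (clique_number (lens p2 (dir p1 p2) \<inter> S)) \<le> real (card (Xs p1 p2))"
  obtains G where "G \<subseteq> S \<times> S"
    "G \<subseteq> {(p1, p2). (1 - \<epsilon>) * real (clique_number S) \<le> real (card (Xs p1 p2))}"
    "\<epsilon> * real (clique_number S) ^ 2 / 2 \<le> real (card G)"
proof -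
  define k where "k = clique_number S"
  obtain K where K: "K \<subseteq> S" "is_clique K" "card K = k"
    using clique_number_attained[OF S(1)] unfolding k_def by blast
  have "finite K" using K(1) S(1) by (rule finite_subset)
  have "0 < k" using S clique_number_pos unfolding k_def by blast
  \<comment> \<open>Each \<open>T p\<^sub>1\<close> has \<open>r + 1 \<ge> \<epsilon>k/2\<close> elements, while a lens through \<open>p\<^sub>2 \<in> T p\<^sub>1\<close> misses at most \<open>r\<close> points of \<open>K\<close>.\<close>
  define r where "r = nat \<lfloor>\<epsilon> * k / 2\<rfloor>"
  have "real r = \<lfloor>\<epsilon> * k / 2\<rfloor>" using \<epsilon> unfolding r_def by simp
  then have r: "real r \<le> \<epsilon> * k / 2" "\<epsilon> * k / 2 < real r + 1" by linarith+
  have "\<epsilon> * k \<le> k" using \<epsilon> by (simp add: mult_left_le_one_le)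
  then have "Suc r \<le> card K" using K(3) r(1) \<open>0 < k\<close> by linarith
  then have "\<forall>p1\<in>K. \<exists>T\<subseteq>K. card T = Suc r \<and> (\<forall>t\<in>T. \<forall>q\<in>K - T. dist q p1 \<le> dist t p1)"
  proof (intro ballI)
    fix p1 assume "p1 \<in> K"
    show "\<exists>T\<subseteq>K. card T = Suc r \<and> (\<forall>t\<in>T. \<forall>q\<in>K - T. dist q p1 \<le> dist t p1)"
      using ex_top_subset[OF \<open>finite K\<close> \<open>Suc r \<le> card K\<close>, of "\<lambda>q. dist q p1"] by blast
  qed
  then obtain T where T: "\<forall>p1\<in>K. T p1 \<subseteq> K \<and> card (T p1) = Suc r \<and>
      (\<forall>t\<in>T p1. \<forall>q\<in>K - T p1. dist q p1 \<le> dist t p1)"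
    by (rule bchoice[elim_format]) blast
  have good: "(1 - \<epsilon>) * real k \<le> real (card (Xs p1 p2))" if p: "p1 \<in> K" "p2 \<in> T p1" for p1 p2
  proof -
    have Tp1: "T p1 \<subseteq> K" "card (T p1) = Suc r" "\<forall>t\<in>T p1. \<forall>q\<in>K - T p1. dist q p1 \<le> dist t p1"
      using T p(1) by auto
    then have "p1 \<in> S" "p2 \<in> S" using K(1) p by auto
    then have "norm (dir p1 p2) = 1" "p1 \<noteq> p2 \<longrightarrow> dir p1 p2 = (1 / norm (p1 - p2)) *\<^sub>R (p1 - p2)"
      using dir by auto
    then have "card K < clique_number (lens p2 (dir p1 p2) \<inter> S) + card (T p1)"
      by (rule card_less_clique_number_lens_add[OF S(1) K(1,2) Tp1(1) p Tp1(3)])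
    then have "real k \<le> real (clique_number (lens p2 (dir p1 p2) \<inter> S)) + real r"
      using K(3) Tp1(2) by linarith
    then have lens: "(1 - \<epsilon> / 2) * k \<le> clique_number (lens p2 (dir p1 p2) \<inter> S)"
      using r(1) by (simp add: left_diff_distrib)
    have "(1 - \<epsilon> / 2) * clique_number (lens p2 (dir p1 p2) \<inter> S) \<le> card (Xs p1 p2)"
      using Xs \<open>p1 \<in> S\<close> \<open>p2 \<in> S\<close> by blast
    then show ?thesis
      using \<epsilon>(2) by (intro half_loss_twice_le[OF of_nat_0_le_iff _ lens]) simp_all
  qed
  have "card (Sigma K T) = (\<Sum>p1\<in>K. card (T p1))"
    using T finite_subset[OF _ \<open>finite K\<close>] by (intro card_SigmaI[OF \<open>finite K\<close>]) blast
  also have "\<dots> = Suc r * k" using T K(3) by simp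
  finally have card_G: "card (Sigma K T) = Suc r * k" .
  have "\<epsilon> * k / 2 * k \<le> real (Suc r) * k"
    using r(2) by (intro mult_right_mono) simp_all
  then have "\<epsilon> * real k ^ 2 / 2 \<le> real (card (Sigma K T))"
    unfolding card_G of_nat_mult by (simp add: power2_eq_square)
  moreover have "Sigma K T \<subseteq> S \<times> S" using T K(1) by blast
  ultimately show ?thesis
    using good unfolding k_def by (intro that[of "Sigma K T"]) auto
qed

lemma pair_pmf_of_set:
  assumes "finite A" "A \<noteq> {}" "finite B" "B \<noteq> {}"
  shows "pair_pmf (pmf_of_set A) (pmf_of_set B) = pmf_of_set (A \<times> B)"
  by (rule pmf_eqI) (auto simp: pmf_pair assms card_cartesian_product indicator_def)

lemma prob_pair_pmf_of_set_ge:
  assumes "finite A" "A \<noteq> {}" "finite B" "B \<noteq> {}" "G \<subseteq> A \<times> B" "G \<subseteq> E"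
  shows "card G / (card A * card B) \<le> measure_pmf.prob (pair_pmf (pmf_of_set A) (pmf_of_set B)) E"
proof -
  have "card G \<le> card (A \<times> B \<inter> E)"
    using assms by (intro card_mono) auto
  then show ?thesis
    using assms by (simp add: pair_pmf_of_set measure_pmf_of_set card_cartesian_product divide_right_mono)
qed

lemma prob_good_pair_ge:
  fixes P :: "(real \<times> real) set" and \<epsilon> :: real
    and dir :: "real \<times> real \<Rightarrow> real \<times> real \<Rightarrow> real \<times> real"
    and Xs :: "real \<times> real \<Rightarrow> real \<times> real \<Rightarrow> (real \<times> real) set"
  assumes P: "finite P" "P \<inter> grid_cell a b i j \<noteq> {}" and \<epsilon>: "0 < \<epsilon>" "\<epsilon> \<le> 1"
    and dir: "\<forall>p1\<in>block_points a b i j P. \<forall>p2\<in>block_points a b i j P.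
          norm (dir p1 p2) = 1 \<and>
          (p1 \<noteq> p2 \<longrightarrow> dir p1 p2 = (1 / norm (p1 - p2)) *\<^sub>R (p1 - p2))"
    and Xs: "\<forall>p1\<in>block_points a b i j P. \<forall>p2\<in>block_points a b i j P.
          real (card (Xs p1 p2)) \<ge>
            (1 - \<epsilon> / 2) * real (clique_number (lens p2 (dir p1 p2) \<inter> block_points a b i j P))"
  shows "measure_pmf.prob
        (pair_pmf (pmf_of_set (block_points a b i j P)) (pmf_of_set (block_points a b i j P)))
        {(p1, p2). real (card (Xs p1 p2)) \<ge> (1 - \<epsilon>) * real (clique_number (block_points a b i j P))}
        \<ge> 1 / 1250 * \<epsilon>"
proof -
  define S where "S = block_points a b i j P"
  define k where "k = clique_number S"
  obtain p0 where "p0 \<in> P" "p0 \<in> grid_cell a b i j" using P(2) by blast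
  then have "p0 \<in> S" unfolding S_def block_points_def by (auto intro!: exI[of _ 0])
  moreover have "finite S" using P(1) unfolding S_def block_points_def by simp
  ultimately have S: "finite S" "S \<noteq> {}" by auto
  obtain G where G: "G \<subseteq> S \<times> S" "G \<subseteq> {(p1, p2). (1 - \<epsilon>) * real k \<le> real (card (Xs p1 p2))}"
    and card_G: "\<epsilon> * real k ^ 2 / 2 \<le> real (card G)"
    using card_good_pairs_ge[OF S _ \<epsilon>(2), of dir Xs] \<epsilon>(1) dir Xs
    unfolding S_def k_def by auto
  have "0 < k" using S clique_number_pos unfolding k_def by blast
  have "real (card S) \<le> 25 * real k"
    using card_block_points_le[OF P(1)] unfolding S_def k_def by (metis of_nat_mono of_nat_mult of_nat_numeral)
  then have "real (card S) * card S \<le> (25 * real k) * (25 * real k)"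
    by (intro mult_mono) simp_all
  then have "(\<epsilon> * real k ^ 2 / 2) / ((25 * real k) * (25 * real k)) \<le> card G / (real (card S) * card S)"
    using card_G S \<epsilon>(1) \<open>0 < k\<close> by (intro frac_le) (auto simp: card_gt_0_iff)
  also have "\<dots> \<le> measure_pmf.prob (pair_pmf (pmf_of_set S) (pmf_of_set S))
      {(p1, p2). (1 - \<epsilon>) * real k \<le> real (card (Xs p1 p2))}"
    using prob_pair_pmf_of_set_ge[OF S S G] by simp
  finally show ?thesis
    using \<open>0 < k\<close> unfolding S_def k_def by (simp add: power2_eq_square)
qed

theorem lemma7:
  "\<exists>c::real. c > 0 \<and>
    (\<forall>(P :: (real \<times> real) set) (a::real) (b::real) (i::int) (j::int) (\<epsilon>::real)
       (dir :: real \<times> real \<Rightarrow> real \<times> real \<Rightarrow> real \<times> real)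
       (Xs :: real \<times> real \<Rightarrow> real \<times> real \<Rightarrow> (real \<times> real) set).
      finite P \<longrightarrow>
      P \<inter> grid_cell a b i j \<noteq> {} \<longrightarrow>
      0 < \<epsilon> \<longrightarrow> \<epsilon> \<le> 1 \<longrightarrow>
      (\<forall>p1\<in>block_points a b i j P. \<forall>p2\<in>block_points a b i j P.
          norm (dir p1 p2) = 1 \<and>
          (p1 \<noteq> p2 \<longrightarrow> dir p1 p2 = (1 / norm (p1 - p2)) *\<^sub>R (p1 - p2))) \<longrightarrow>
      (\<forall>p1\<in>block_points a b i j P. \<forall>p2\<in>block_points a b i j P.
          Xs p1 p2 \<subseteq> lens p2 (dir p1 p2) \<inter> block_points a b i j P \<and>
          is_clique (Xs p1 p2) \<and>
          real (card (Xs p1 p2)) \<ge>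
            (1 - \<epsilon> / 2) * real (clique_number (lens p2 (dir p1 p2) \<inter> block_points a b i j P))) \<longrightarrow>
      measure_pmf.prob
        (pair_pmf (pmf_of_set (block_points a b i j P)) (pmf_of_set (block_points a b i j P)))
        {(p1, p2). real (card (Xs p1 p2)) \<ge> (1 - \<epsilon>) * real (clique_number (block_points a b i j P))}
        \<ge> c * \<epsilon>)"
  by (intro exI[of _ "1 / 1250"] conjI allI impI prob_good_pair_ge) auto

end
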